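(* For integers $r,k\ge 0$ with $r\ne k$ and real $\alpha>\max\{k,r\}$, $$\sum_{n=1}^\infty\frac{H_{n+\alpha}}{(n+r)(n+k)}=\frac{k-\alpha}{k-r}\left\{\frac{H_{\alpha-k}^2+H_{\alpha-k}^{(2)}}{\alpha-k}-\sum_{j=1}^k\frac{H_{\alpha+j-k}}{j(\alpha+j-k)}\right\}+\frac{\alpha-r}{k-r}\left\{\frac{H_{\alpha-r}^2+H_{\alpha-r}^{(2)}}{\alpha-r}-\sum_{j=1}^r\frac{H_{\alpha+j-r}}{j(\alpha+j-r)}\right\}.$$
   Context: Shifted harmonic numbers: for a real $\alpha$ that is not a negative integer, $H_\alpha := \sum_{k=1}^\infty\left(\frac1k-\frac1{k+\alpha}\right)$ and, for integers $m\ge 2$, $H_\alpha^{(m)} := \sum_{k=1}^\infty\left(\frac1{k^m}-\frac1{(k+\alpha)^m}\right)=\zeta(m)-\zeta(m,\alpha+1)$, where $\zeta$ is the Riemann zeta function and $\zeta(s,\alpha+1)=\sum_{n=1}^\infty (n+\alpha)^{-s}$ is the Hurwitz zeta function. Powers such as $H_\alpha^2$ mean $(H_\alpha)^2$. Empty sums are $0$. *)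

theory Defs
  imports "HOL-Analysis.Analysis"
begin

definition shifted_harmonic :: "real \<Rightarrow> real" where
  "shifted_harmonic a = (\<Sum>k. 1 / real (Suc k) - 1 / (real (Suc k) + a))"

definition shifted_harmonic_ord :: "nat \<Rightarrow> real \<Rightarrow> real" where
  "shifted_harmonic_ord m a = (\<Sum>k. 1 / real (Suc k) ^ m - 1 / (real (Suc k) + a) ^ m)"

end

theory Submission
  imports Defs "HOL-Real_Asymp.Real_Asymp"
begin

text \<open>
  Let P(m) = H(a-m)^2 + H2(a-m) - (a-m) * sum_{j=1..m} H(a+j-m) / (j (a+j-m)), which is
  (a-m) times the braced expression of the theorem (\<open>harmonic_potential\<close> below).
  Summation by parts, using H(x+1) - H(x) = 1/(x+1), gives
  sum_n H(n+a) (1/(n+m) - 1/(n+m+1)) = H(a)/(m+1) + (H(a) - H(m))/(a-m),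
  and an induction on m shows that this is exactly P(m) - P(m+1). Telescoping in m yields
  sum_n H(n+a) (1/(n+r) - 1/(n+k)) = P(r) - P(k), and partial fractions finish the proof.
\<close>

lemma summable_inverse_shifted_power:
  assumes "a \<ge> 0" "m \<ge> 2"
  shows "summable (\<lambda>k. 1 / (real (Suc k) + a) ^ m)"
proof (rule summable_comparison_test')
  show "summable (\<lambda>k. 1 / real (Suc k) ^ m)"
    using inverse_power_summable[OF \<open>m \<ge> 2\<close>, where 'a=real]
    by (subst summable_Suc_iff) (simp add: inverse_eq_divide)
  show "norm (1 / (real (Suc k) + a) ^ m) \<le> 1 / real (Suc k) ^ m" for k
    using assms by (auto intro!: divide_left_mono power_mono)
qed

lemma summable_shifted_harmonic_terms:
  assumes "a \<ge> 0"
  shows "summable (\<lambda>k. 1 / real (Suc k) - 1 / (real (Suc k) + a))"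
proof (rule summable_comparison_test')
  have "summable (\<lambda>k. 1 / real (Suc k) ^ 2)"
    using summable_inverse_shifted_power[of 0 2] by simp
  then show "summable (\<lambda>k. a * (1 / real (Suc k) ^ 2))"
    by (rule summable_mult)
  show "norm (1 / real (Suc k) - 1 / (real (Suc k) + a)) \<le> a * (1 / real (Suc k) ^ 2)" for k
  proof -
    have "1 / real (Suc k) - 1 / (real (Suc k) + a) = a / (real (Suc k) * (real (Suc k) + a))"
      using assms by (simp add: field_simps)
    also have "\<dots> \<le> a / (real (Suc k) * real (Suc k))"
      using assms by (intro divide_left_mono mult_left_mono) auto
    finally show ?thesis
      using assms by (simp add: power2_eq_square field_simps)
  qed
qed

lemma summable_shifted_harmonic_ord_terms:
  assumes "a \<ge> 0" "m \<ge> 2"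
  shows "summable (\<lambda>k. 1 / real (Suc k) ^ m - 1 / (real (Suc k) + a) ^ m)"
  using summable_diff[OF summable_inverse_shifted_power[of 0 m] summable_inverse_shifted_power[of a m]]
    assms by simp

lemma shifted_harmonic_0 [simp]: "shifted_harmonic 0 = 0"
  unfolding shifted_harmonic_def by simp

lemma shifted_harmonic_nonneg: "a \<ge> 0 \<Longrightarrow> shifted_harmonic a \<ge> 0"
  unfolding shifted_harmonic_def
  by (intro suminf_nonneg summable_shifted_harmonic_terms) (auto simp: field_simps)

lemma suminf_shift_by_one:
  fixes c :: "nat \<Rightarrow> real" and \<phi> :: "real \<Rightarrow> real"
  assumes "summable (\<lambda>k. c k - \<phi> (real (Suc k) + a))"
    and "summable (\<lambda>k. c k - \<phi> (real (Suc k) + (a + 1)))"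
    and "(\<lambda>k. \<phi> (real (Suc k) + a)) \<longlonglongrightarrow> 0"
  shows "(\<Sum>k. c k - \<phi> (real (Suc k) + (a + 1))) = (\<Sum>k. c k - \<phi> (real (Suc k) + a)) + \<phi> (a + 1)"
proof -
  have "(\<lambda>k. (c k - \<phi> (real (Suc k) + (a + 1))) - (c k - \<phi> (real (Suc k) + a))) sums \<phi> (a + 1)"
    using telescope_sums'[OF assms(3)] by (simp add: add_ac)
  moreover have "(\<lambda>k. (c k - \<phi> (real (Suc k) + (a + 1))) - (c k - \<phi> (real (Suc k) + a)))
      sums ((\<Sum>k. c k - \<phi> (real (Suc k) + (a + 1))) - (\<Sum>k. c k - \<phi> (real (Suc k) + a)))"
    by (intro sums_diff summable_sums assms(1,2))
  ultimately show ?thesis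
    using sums_unique2 by fastforce
qed

lemma shifted_harmonic_plus_one:
  assumes "a \<ge> 0"
  shows "shifted_harmonic (a + 1) = shifted_harmonic a + 1 / (a + 1)"
  unfolding shifted_harmonic_def
  using assms by (intro suminf_shift_by_one summable_shifted_harmonic_terms) (auto, real_asymp)

lemma shifted_harmonic_ord_plus_one:
  assumes "a \<ge> 0" "m \<ge> 2"
  shows "shifted_harmonic_ord m (a + 1) = shifted_harmonic_ord m a + 1 / (a + 1) ^ m"
  unfolding shifted_harmonic_ord_def
  using assms
  by (intro suminf_shift_by_one summable_shifted_harmonic_ord_terms summable_LIMSEQ_zero
      summable_inverse_shifted_power) auto

lemma shifted_harmonic_of_nat_plus:
  assumes "a \<ge> 0"
  shows "shifted_harmonic (real N + a) = shifted_harmonic a + (\<Sum>i<N. 1 / (real (Suc i) + a))"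
proof (induction N)
  case (Suc N)
  have "shifted_harmonic (real (Suc N) + a) = shifted_harmonic (real N + a) + 1 / (real N + a + 1)"
    using shifted_harmonic_plus_one[of "real N + a"] assms by (simp add: add_ac)
  with Suc show ?case by (simp add: add_ac)
qed simp

lemma harm_le_ln_plus_one: "harm N \<le> ln (real N + 1) + (1::real)"
proof (cases "N = 0")
  case False
  then have "harm N - ln (real N) \<le> harm 1 - ln (real (1::nat))"
    using euler_mascheroni_sequence_decreasing[of 1 N] by simp
  moreover have "ln (real N) \<le> ln (real N + 1)"
    using False by simp
  ultimately show ?thesis by (simp add: harm_def)
qed (simp add: harm_def)

lemma shifted_harmonic_over_linear_LIMSEQ_0:
  assumes "a \<ge> 0" "c > 0"
  shows "(\<lambda>N. shifted_harmonic (real N + a) / (real N + c)) \<longlonglongrightarrow> 0"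
proof (rule tendsto_sandwich[of "\<lambda>_. 0" _ _ "\<lambda>N. (shifted_harmonic a + ln (real N + 1) + 1) / (real N + c)"])
  show "\<forall>\<^sub>F N in sequentially. 0 \<le> shifted_harmonic (real N + a) / (real N + c)"
    using assms shifted_harmonic_nonneg[of "real _ + a"] by auto
  have "shifted_harmonic (real N + a) \<le> shifted_harmonic a + ln (real N + 1) + 1" for N
  proof -
    have "(\<Sum>i<N. 1 / (real (Suc i) + a)) \<le> (\<Sum>i<N. inverse (real (Suc i)))"
      using assms by (intro sum_mono) (auto simp: inverse_eq_divide intro!: divide_left_mono)
    also have "\<dots> = harm N"
      by (simp add: harm_altdef)
    finally show ?thesis
      using harm_le_ln_plus_one[of N] shifted_harmonic_of_nat_plus[OF assms(1), of N] by simp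
  qed
  then show "\<forall>\<^sub>F N in sequentially. shifted_harmonic (real N + a) / (real N + c)
      \<le> (shifted_harmonic a + ln (real N + 1) + 1) / (real N + c)"
    using assms by (intro always_eventually allI divide_right_mono) auto
  show "(\<lambda>N. (shifted_harmonic a + ln (real N + 1) + 1) / (real N + c)) \<longlonglongrightarrow> 0"
    using assms(2) by real_asymp
qed simp

lemma sums_inverse_shifted_product:
  assumes "a \<ge> 0" "b \<ge> 0" "a \<noteq> b"
  shows "(\<lambda>n. 1 / ((real (Suc n) + a) * (real (Suc n) + b)))
    sums ((shifted_harmonic a - shifted_harmonic b) / (a - b))"
proof -
  have "(\<lambda>n. ((1 / real (Suc n) - 1 / (real (Suc n) + a)) - (1 / real (Suc n) - 1 / (real (Suc n) + b))) / (a - b))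
      sums ((shifted_harmonic a - shifted_harmonic b) / (a - b))"
    unfolding shifted_harmonic_def using assms
    by (intro sums_divide sums_diff summable_sums summable_shifted_harmonic_terms)
  moreover have "((1 / real (Suc n) - 1 / (real (Suc n) + a)) - (1 / real (Suc n) - 1 / (real (Suc n) + b))) / (a - b)
      = 1 / ((real (Suc n) + a) * (real (Suc n) + b))" for n
  proof -
    have "real (Suc n) + a > 0" "real (Suc n) + b > 0" "a - b \<noteq> 0"
      using assms by auto
    then show ?thesis by (simp add: divide_simps) (simp add: algebra_simps)
  qed
  ultimately show ?thesis by simp
qed

lemma sum_lessThan_by_parts:
  fixes a d :: "nat \<Rightarrow> 'a::comm_ring"
  shows "(\<Sum>n<N. a (Suc n) * (d n - d (Suc n)))
    = a 0 * d 0 + (\<Sum>n<N. (a (Suc n) - a n) * d n) - a N * d N"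
  by (induction N) (simp_all add: algebra_simps)

lemma sums_by_parts:
  fixes a d :: "nat \<Rightarrow> 'a::real_normed_field"
  assumes "(\<lambda>n. (a (Suc n) - a n) * d n) sums s" and "(\<lambda>n. a n * d n) \<longlonglongrightarrow> 0"
  shows "(\<lambda>n. a (Suc n) * (d n - d (Suc n))) sums (a 0 * d 0 + s)"
  using tendsto_diff[OF tendsto_add[OF tendsto_const[of "a 0 * d 0"] assms(1)[unfolded sums_def]] assms(2)]
  unfolding sums_def sum_lessThan_by_parts by simp

lemma sums_shifted_harmonic_times_consecutive_diff:
  assumes "\<alpha> \<ge> 0" "\<alpha> \<noteq> real m"
  shows "(\<lambda>n. shifted_harmonic (real (Suc n) + \<alpha>) *
      (1 / (real (Suc n) + real m) - 1 / (real (Suc n) + real m + 1)))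
    sums (shifted_harmonic \<alpha> / (real m + 1) + (shifted_harmonic \<alpha> - shifted_harmonic (real m)) / (\<alpha> - real m))"
proof -
  define a where "a n = shifted_harmonic (real n + \<alpha>)" for n
  define d where "d n = 1 / (real n + real m + 1)" for n
  have "a (Suc n) - a n = 1 / (real (Suc n) + \<alpha>)" for n
    using shifted_harmonic_plus_one[of "real n + \<alpha>"] assms unfolding a_def by (simp add: add_ac)
  then have "(\<lambda>n. (a (Suc n) - a n) * d n) = (\<lambda>n. 1 / ((real (Suc n) + \<alpha>) * (real (Suc n) + real m)))"
    by (simp add: d_def add_ac)
  then have "(\<lambda>n. (a (Suc n) - a n) * d n)
      sums ((shifted_harmonic \<alpha> - shifted_harmonic (real m)) / (\<alpha> - real m))"
    using sums_inverse_shifted_product[of \<alpha> "real m"] assms by simp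
  moreover have "(\<lambda>n. a n * d n) \<longlonglongrightarrow> 0"
    using shifted_harmonic_over_linear_LIMSEQ_0[of \<alpha> "real m + 1"] assms
    by (simp add: a_def d_def add_ac)
  ultimately have "(\<lambda>n. a (Suc n) * (d n - d (Suc n)))
      sums (a 0 * d 0 + (shifted_harmonic \<alpha> - shifted_harmonic (real m)) / (\<alpha> - real m))"
    by (rule sums_by_parts)
  then show ?thesis
    by (simp add: a_def d_def add_ac)
qed

lemma shifted_harmonic_weighted_sum_step:
  assumes "b \<ge> 1"
  shows "2 * shifted_harmonic b / b
      - b * (\<Sum>j=1..m. shifted_harmonic (b + real j) / (real j * (b + real j)))
      + (b - 1) * (\<Sum>j=1..Suc m. shifted_harmonic (b - 1 + real j) / (real j * (b - 1 + real j)))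
    = shifted_harmonic (b + real m) / (real m + 1)
      + (shifted_harmonic (b + real m) - shifted_harmonic (real m)) / b"
proof (induction m)
  case 0
  have "b > 0" using assms by simp
  then show ?case by (simp add: field_simps)
next
  case (Suc m)
  define A where "A = (\<Sum>j=1..m. shifted_harmonic (b + real j) / (real j * (b + real j)))"
  define B where "B = (\<Sum>j=1..Suc m. shifted_harmonic (b - 1 + real j) / (real j * (b - 1 + real j)))"
  define y where "y = shifted_harmonic (b + real m)"
  define h where "h = shifted_harmonic (real m)"
  define y' where "y' = y + 1 / (b + real m + 1)"
  have hy: "shifted_harmonic (b + real (Suc m)) = y'"
    using shifted_harmonic_plus_one[of "b + real m"] assms unfolding y'_def y_def by (simp add: add_ac)
  have hh: "shifted_harmonic (real (Suc m)) = h + 1 / (real m + 1)"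
    using shifted_harmonic_plus_one[of "real m"] unfolding h_def by (simp add: add_ac)
  have sA: "(\<Sum>j=1..Suc m. shifted_harmonic (b + real j) / (real j * (b + real j)))
      = A + y' / ((real m + 1) * (b + real m + 1))"
    unfolding A_def sum.cl_ivl_Suc[of _ 1 m] hy by (simp add: add_ac)
  have shift: "b - 1 + real (Suc (Suc m)) = b + real (Suc m)" by simp
  have sB: "(\<Sum>j=1..Suc (Suc m). shifted_harmonic (b - 1 + real j) / (real j * (b - 1 + real j)))
      = B + y' / ((real m + 2) * (b + real m + 1))"
    unfolding B_def sum.cl_ivl_Suc[of _ 1 "Suc m"] shift hy by (simp add: add_ac)
  have IH: "2 * shifted_harmonic b / b - b * A + (b - 1) * B = y / (real m + 1) + (y - h) / b"
    using Suc.IH unfolding A_def B_def y_def h_def .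
  have "y / (real m + 1) + (y - h) / b - b * (y' / ((real m + 1) * (b + real m + 1)))
      + (b - 1) * (y' / ((real m + 2) * (b + real m + 1)))
      = y' / (real m + 2) + (y' - (h + 1 / (real m + 1))) / b"
  proof -
    have "b > 0" "b + real m + 1 > 0" using assms by auto
    then show ?thesis unfolding y'_def by (simp add: divide_simps) (simp add: algebra_simps)
  qed
  then show ?case
    unfolding sA sB hy hh using IH by (simp add: algebra_simps)
qed

definition harmonic_potential :: "real \<Rightarrow> nat \<Rightarrow> real" where
  "harmonic_potential \<alpha> m =
     shifted_harmonic (\<alpha> - real m) ^ 2 + shifted_harmonic_ord 2 (\<alpha> - real m)
     - (\<alpha> - real m) * (\<Sum>j=1..m. shifted_harmonic (\<alpha> + real j - real m) / (real j * (\<alpha> + real j - real m)))"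

lemma harmonic_potential_diff_Suc:
  assumes "\<alpha> \<ge> real m + 1"
  shows "harmonic_potential \<alpha> m - harmonic_potential \<alpha> (Suc m)
    = shifted_harmonic \<alpha> / (real m + 1) + (shifted_harmonic \<alpha> - shifted_harmonic (real m)) / (\<alpha> - real m)"
proof -
  define b where "b = \<alpha> - real m"
  have b: "b \<ge> 1" "\<alpha> - real (Suc m) = b - 1" "\<alpha> = b + real m"
    using assms by (simp_all add: b_def)
  have H: "shifted_harmonic b = shifted_harmonic (b - 1) + 1 / b"
    using shifted_harmonic_plus_one[of "b - 1"] b by simp
  have H2: "shifted_harmonic_ord 2 b = shifted_harmonic_ord 2 (b - 1) + 1 / b ^ 2"
    using shifted_harmonic_ord_plus_one[of "b - 1" 2] b by simp
  have "harmonic_potential \<alpha> m - harmonic_potential \<alpha> (Suc m)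
      = 2 * shifted_harmonic b / b
        - b * (\<Sum>j=1..m. shifted_harmonic (b + real j) / (real j * (b + real j)))
        + (b - 1) * (\<Sum>j=1..Suc m. shifted_harmonic (b - 1 + real j) / (real j * (b - 1 + real j)))"
    unfolding harmonic_potential_def b(2) unfolding b(3)
    using b(1) by (simp add: H H2 field_simps power2_eq_square)
  also have "\<dots> = shifted_harmonic \<alpha> / (real m + 1) + (shifted_harmonic \<alpha> - shifted_harmonic (real m)) / b"
    unfolding b(3) by (rule shifted_harmonic_weighted_sum_step[OF b(1)])
  finally show ?thesis by (simp add: b_def)
qed

lemma sums_shifted_harmonic_times_diff:
  assumes "r \<le> k" "\<alpha> \<ge> real k"
  shows "(\<lambda>n. shifted_harmonic (real (Suc n) + \<alpha>) * (1 / (real (Suc n) + real r) - 1 / (real (Suc n) + real k)))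
    sums (harmonic_potential \<alpha> r - harmonic_potential \<alpha> k)"
  using assms
proof (induction k)
  case (Suc k)
  show ?case
  proof (cases "r = Suc k")
    case False
    with Suc.prems have "r \<le> k" "\<alpha> \<ge> real k + 1" by auto
    then have "(\<lambda>n. shifted_harmonic (real (Suc n) + \<alpha>) * (1 / (real (Suc n) + real r) - 1 / (real (Suc n) + real k))
        + shifted_harmonic (real (Suc n) + \<alpha>) * (1 / (real (Suc n) + real k) - 1 / (real (Suc n) + real k + 1)))
      sums ((harmonic_potential \<alpha> r - harmonic_potential \<alpha> k)
        + (harmonic_potential \<alpha> k - harmonic_potential \<alpha> (Suc k)))"
      using Suc.IH sums_shifted_harmonic_times_consecutive_diff[of \<alpha> k] harmonic_potential_diff_Suc[of k \<alpha>]
      by (intro sums_add) auto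
    then show ?thesis by (simp add: algebra_simps)
  qed simp
qed simp

lemma sums_shifted_harmonic_over_product:
  assumes "r \<noteq> k" "\<alpha> \<ge> real (max k r)"
  shows "(\<lambda>n. shifted_harmonic (real (Suc n) + \<alpha>) / ((real (Suc n) + real r) * (real (Suc n) + real k)))
    sums ((harmonic_potential \<alpha> r - harmonic_potential \<alpha> k) / (real k - real r))"
proof -
  have diff: "(\<lambda>n. shifted_harmonic (real (Suc n) + \<alpha>) * (1 / (real (Suc n) + real r) - 1 / (real (Suc n) + real k)))
    sums (harmonic_potential \<alpha> r - harmonic_potential \<alpha> k)"
  proof (cases "r \<le> k")
    case True
    then show ?thesis using sums_shifted_harmonic_times_diff[of r k \<alpha>] assms by auto
  next
    case False
    then show ?thesis
      using sums_minus[OF sums_shifted_harmonic_times_diff[of k r \<alpha>]] assms by (simp add: algebra_simps)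
  qed
  have "1 / ((real (Suc n) + real r) * (real (Suc n) + real k))
      = (1 / (real (Suc n) + real r) - 1 / (real (Suc n) + real k)) / (real k - real r)" for n
    using assms(1) by (simp add: divide_simps del: of_nat_Suc)
  then show ?thesis
    using sums_divide[OF diff, of "real k - real r"] by (simp add: divide_inverse mult_ac del: of_nat_Suc)
qed

theorem theorem2p2:
  fixes r k :: nat and \<alpha> :: real
  assumes "r \<noteq> k" and "\<alpha> > real (max k r)"
  shows "(\<lambda>n. shifted_harmonic (real (Suc n) + \<alpha>) /
              ((real (Suc n) + real r) * (real (Suc n) + real k)))
         sums
         ((real k - \<alpha>) / (real k - real r) *
            ((shifted_harmonic (\<alpha> - real k) ^ 2 + shifted_harmonic_ord 2 (\<alpha> - real k)) / (\<alpha> - real k)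
             - (\<Sum>j=1..k. shifted_harmonic (\<alpha> + real j - real k) / (real j * (\<alpha> + real j - real k))))
          + (\<alpha> - real r) / (real k - real r) *
            ((shifted_harmonic (\<alpha> - real r) ^ 2 + shifted_harmonic_ord 2 (\<alpha> - real r)) / (\<alpha> - real r)
             - (\<Sum>j=1..r. shifted_harmonic (\<alpha> + real j - real r) / (real j * (\<alpha> + real j - real r)))))"
proof -
  have "\<alpha> - real k \<noteq> 0" "\<alpha> - real r \<noteq> 0" "real k - real r \<noteq> 0"
    using assms by auto
  then have "(harmonic_potential \<alpha> r - harmonic_potential \<alpha> k) / (real k - real r)
    = (real k - \<alpha>) / (real k - real r) *
            ((shifted_harmonic (\<alpha> - real k) ^ 2 + shifted_harmonic_ord 2 (\<alpha> - real k)) / (\<alpha> - real k)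
             - (\<Sum>j=1..k. shifted_harmonic (\<alpha> + real j - real k) / (real j * (\<alpha> + real j - real k))))
          + (\<alpha> - real r) / (real k - real r) *
            ((shifted_harmonic (\<alpha> - real r) ^ 2 + shifted_harmonic_ord 2 (\<alpha> - real r)) / (\<alpha> - real r)
             - (\<Sum>j=1..r. shifted_harmonic (\<alpha> + real j - real r) / (real j * (\<alpha> + real j - real r))))"
    unfolding harmonic_potential_def by (simp add: divide_simps) (simp add: algebra_simps)
  with sums_shifted_harmonic_over_product[of r k \<alpha>] assms show ?thesis by simp
qed

end
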